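(* Let $q$ be a prime power with $q\equiv 1\pmod 3$, and let $t_1\in GF(q)$ be a root of $t^2+t+1=0$. Suppose $\pi\in AGL(1,q)$, $\pi(x)=ax+r$, is not an isolated vertex of $C_A(q)$. Then the neighbors of $\pi$ in $C_A(q)$ are exactly $\sigma_1$ and $\sigma_2$, where $\sigma_1(x)=at_1x+(a-t_1)F+r(1+t_1)$ and $\sigma_2(x)=a t_1^{-1}x+(a-t_1^{-1})F+r(1+t_1^{-1})$. In particular every non-isolated vertex of $C_A(q)$ has degree $2$.
   Context: $AGL(1,q)=\{x\mapsto ax+b: a\in GF(q)\setminus\{0\}, b\in GF(q)\}$, acting on $GF(q)$. For permutations $\pi,\sigma$ of a finite set, $hd(\pi,\sigma)$ is the number of points at which they differ. Fix a distinguished element $F\in GF(q)$. For a permutation $\pi$ of $GF(q)$, $\pi^{\triangle}$ is the permutation with $\pi^{\triangle}(\pi^{-1}(F))=\pi(F)$, $\pi^{\triangle}(F)=F$, and $\pi^{\triangle}(x)=\pi(x)$ otherwise. The contraction graph $C_A(q)$ has vertex set $AGL(1,q)$, with distinct $\pi,\sigma$ adjacent iff $hd(\pi^{\triangle},\sigma^{\triangle})=q-4$. *)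

theory Defs
  imports Main
begin

text \<open>GF(q) is modelled as a finite field type 'a with q = CARD('a).\<close>

definition AGL1 :: "('a::field \<Rightarrow> 'a) set" where
  "AGL1 = {\<pi>. \<exists>a b. a \<noteq> 0 \<and> \<pi> = (\<lambda>x. a * x + b)}"

definition hd :: "('a::finite \<Rightarrow> 'b) \<Rightarrow> ('a \<Rightarrow> 'b) \<Rightarrow> nat" where
  "hd \<pi> \<sigma> = card {x. \<pi> x \<noteq> \<sigma> x}"

definition contr :: "'a \<Rightarrow> ('a \<Rightarrow> 'a) \<Rightarrow> ('a \<Rightarrow> 'a)" where
  "contr F \<pi> x = (if x = F then F else if \<pi> x = F then \<pi> F else \<pi> x)"

definition CA_adj :: "'a::{field,finite} \<Rightarrow> ('a \<Rightarrow> 'a) \<Rightarrow> ('a \<Rightarrow> 'a) \<Rightarrow> bool" where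
  "CA_adj F \<pi> \<sigma> \<longleftrightarrow> \<pi> \<in> AGL1 \<and> \<sigma> \<in> AGL1 \<and> \<pi> \<noteq> \<sigma> \<and>
     hd (contr F \<pi>) (contr F \<sigma>) = card (UNIV :: 'a set) - 4"

end

theory Submission
  imports Defs "HOL-Number_Theory.Residues"
begin

(* The contractions of two injective maps pi, sigma can only agree at F, at the preimages
   u = pi^-1(F) and v = sigma^-1(F), and where pi and sigma coincide. Two distinct affine maps
   coincide in at most one point, so hd = q - 4 forces agreement at exactly these four distinct
   points. Writing sigma(x) = a k x + s, agreement at u and v means sigma(u) = pi(F) and
   pi(v) = sigma(F): the first determines s = (a - k) F + r (1 + k), and the second then reduces to
   (a F + r - F) (k^2 + k + 1) = 0. As pi(F) <> F, k is a root of t^2 + t + 1, i.e. k = t1 or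
   k = t1^-1, and these two roots differ because q = 1 (mod 3) excludes characteristic 3. *)

lemma contr_agree_subset:
  assumes "inj \<pi>" "inj \<sigma>" "\<pi> u = F" "\<sigma> v = F"
  shows "{x. contr F \<pi> x = contr F \<sigma> x} \<subseteq> {F, u, v} \<union> {x. \<pi> x = \<sigma> x}"
proof
  fix x
  assume agree: "x \<in> {x. contr F \<pi> x = contr F \<sigma> x}"
  show "x \<in> {F, u, v} \<union> {x. \<pi> x = \<sigma> x}"
  proof (cases "x \<in> {F, u, v}")
    case False
    then have "\<pi> x \<noteq> \<pi> u" "\<sigma> x \<noteq> \<sigma> v"
      using inj_eq[OF assms(1)] inj_eq[OF assms(2)] by simp_all
    with agree False show ?thesis
      using assms(3,4) by (simp add: contr_def)
  qed blast
qed

lemma card_contr_agree_le_3: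
  assumes "inj \<pi>" "inj \<sigma>" "\<pi> u = F" "\<sigma> v = F" "\<And>x. \<pi> x \<noteq> \<sigma> x"
  shows "card {x. contr F \<pi> x = contr F \<sigma> x} \<le> 3"
proof -
  have "{x. contr F \<pi> x = contr F \<sigma> x} \<subseteq> {F, u, v}"
    using contr_agree_subset[OF assms(1-4)] assms(5) by blast
  then have "card {x. contr F \<pi> x = contr F \<sigma> x} \<le> card {F, u, v}"
    by (simp add: card_mono)
  also have "\<dots> \<le> 3"
    by (simp add: card_insert_if)
  finally show ?thesis .
qed

lemma exchange_points_distinct:
  assumes inj: "inj \<pi>" "inj \<sigma>" and u: "\<pi> u = F" and v: "\<sigma> v = F"
    and moved: "\<pi> F \<noteq> F" and exch: "\<sigma> u = \<pi> F" "\<pi> v = \<sigma> F"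
    and x0: "\<pi> x0 = \<sigma> x0"
  shows "distinct [F, u, v, x0]"
proof -
  have "F \<noteq> u"
    using moved u by auto
  moreover have "u \<noteq> v"
    using moved exch(1) v by auto
  moreover have "F \<noteq> v"
    using \<open>u \<noteq> v\<close> exch(2) u v injD[OF inj(1)] by metis
  moreover have "\<pi> F \<noteq> \<sigma> F"
    using \<open>F \<noteq> u\<close> exch(1) injD[OF inj(2)] by metis
  moreover have "\<pi> u \<noteq> \<sigma> u"
    using moved exch(1) u by simp
  moreover have "\<pi> v \<noteq> \<sigma> v"
    using \<open>F \<noteq> v\<close> exch(2) v injD[OF inj(2)] by metis
  ultimately show ?thesis
    using x0 by auto
qed

lemma card_contr_agree_eq_4_iff:
  assumes inj: "inj \<pi>" "inj \<sigma>" and u: "\<pi> u = F" and v: "\<sigma> v = F"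
    and x0: "{x. \<pi> x = \<sigma> x} = {x0}"
  shows "card {x. contr F \<pi> x = contr F \<sigma> x} = 4 \<longleftrightarrow>
           \<pi> F \<noteq> F \<and> \<sigma> u = \<pi> F \<and> \<pi> v = \<sigma> F"
proof -
  define A where "A = {x. contr F \<pi> x = contr F \<sigma> x}"
  have A_sub: "A \<subseteq> {F, u, v, x0}"
    using contr_agree_subset[OF inj u v] x0 unfolding A_def by auto
  have pre_u: "\<pi> x = F \<longleftrightarrow> x = u" and pre_v: "\<sigma> x = F \<longleftrightarrow> x = v" for x
    using u v inj by (metis injD)+
  have coincide: "\<pi> x0 = \<sigma> x0"
    using x0 by auto
  have "card A = 4 \<longleftrightarrow> \<pi> F \<noteq> F \<and> \<sigma> u = \<pi> F \<and> \<pi> v = \<sigma> F"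
  proof
    assume "card A = 4"
    then have "A = {F, u, v, x0}" and "card {F, u, v, x0} = 4"
      using A_sub card_mono[OF _ A_sub] card_subset_eq[OF _ A_sub]
      by (auto simp: card_insert_if split: if_splits)
    then have "distinct [F, u, v, x0]" and "u \<in> A" "v \<in> A"
      using card_distinct[of "[F, u, v, x0]"] by simp_all
    then show "\<pi> F \<noteq> F \<and> \<sigma> u = \<pi> F \<and> \<pi> v = \<sigma> F"
      unfolding A_def contr_def by (auto simp: pre_u pre_v)
  next
    assume exch: "\<pi> F \<noteq> F \<and> \<sigma> u = \<pi> F \<and> \<pi> v = \<sigma> F"
    then have distinct: "distinct [F, u, v, x0]"
      using exchange_points_distinct[OF inj u v _ _ _ coincide] by blast
    then have "{F, u, v, x0} \<subseteq> A"
      using exch coincide unfolding A_def contr_def by (auto simp: pre_u pre_v)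
    with A_sub have "A = {F, u, v, x0}"
      by blast
    then show "card A = 4"
      using distinct_card[OF distinct] by simp
  qed
  then show ?thesis
    unfolding A_def .
qed

lemma inj_affine:
  fixes a b :: "'a::field"
  assumes "a \<noteq> 0"
  shows "inj (\<lambda>x. a * x + b)"
  using assms by (auto intro: injI)

lemma affine_in_AGL1:
  fixes a b :: "'a::field"
  assumes "a \<noteq> 0"
  shows "(\<lambda>x. a * x + b) \<in> AGL1"
  using assms unfolding AGL1_def by blast

lemma affine_eq_iff:
  fixes a b r s :: "'a::field"
  shows "(\<lambda>x. a * x + r) = (\<lambda>x. b * x + s) \<longleftrightarrow> a = b \<and> r = s"
proof
  assume eq: "(\<lambda>x. a * x + r) = (\<lambda>x. b * x + s)"
  then have "r = s"
    using fun_cong[OF eq, of 0] by simp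
  then show "a = b \<and> r = s"
    using fun_cong[OF eq, of 1] by simp
qed simp

lemma affine_coincidence:
  fixes a b r s :: "'a::field"
  assumes "a \<noteq> b"
  shows "{x. a * x + r = b * x + s} = {(s - r) / (a - b)}"
  using assms by (auto simp: field_simps)

(* (F - r) / a and (F - s) / (a k) are the preimages of F under the two maps, so the left-hand
   side says that each map sends the other's preimage of F to the other's image of F. *)
lemma affine_exchange_iff:
  fixes a k r s F :: "'a::field"
  assumes a: "a \<noteq> 0" and k: "k \<noteq> 0" and moved: "a * F + r \<noteq> F"
  shows "a * k * ((F - r) / a) + s = a * F + r \<and> a * ((F - s) / (a * k)) + r = a * k * F + s
         \<longleftrightarrow> k^2 + k + 1 = 0 \<and> s = (a - k) * F + r * (1 + k)"
proof -
  have "a * k * ((F - r) / a) + s = a * F + r \<longleftrightarrow> k * (F - r) + s = a * F + r"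
    using a by simp
  also have "\<dots> \<longleftrightarrow> s = (a - k) * F + r * (1 + k)"
    by (simp add: algebra_simps eq_diff_eq' flip: eq_diff_eq)
  finally have first:
    "a * k * ((F - r) / a) + s = a * F + r \<longleftrightarrow> s = (a - k) * F + r * (1 + k)" .
  have second: "a * ((F - s) / (a * k)) + r = a * k * F + s \<longleftrightarrow> k^2 + k + 1 = 0"
    if s: "s = (a - k) * F + r * (1 + k)"
  proof -
    have "a * ((F - s) / (a * k)) + r = a * k * F + s
          \<longleftrightarrow> k * (a * ((F - s) / (a * k)) + r) - k * (a * k * F + s) = 0"
      using k by (simp flip: right_diff_distrib)
    also have "k * (a * ((F - s) / (a * k)) + r) - k * (a * k * F + s)
               = - (a * F + r - F) * (k^2 + k + 1)"
      using a k unfolding s by (simp add: field_simps power2_eq_square)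
    finally show ?thesis
      using moved by simp
  qed
  from first second show ?thesis
    by blast
qed

lemma card_contr_agree_affine_eq_4_iff:
  fixes a k r s F :: "'a::field"
  assumes a: "a \<noteq> 0" and k: "k \<noteq> 0" "k \<noteq> 1"
  shows "card {x. contr F (\<lambda>x. a * x + r) x = contr F (\<lambda>x. a * k * x + s) x} = 4
         \<longleftrightarrow> a * F + r \<noteq> F \<and> k^2 + k + 1 = 0 \<and> s = (a - k) * F + r * (1 + k)"
proof -
  have "a \<noteq> a * k" "a * k \<noteq> 0"
    using a k by auto
  then have "card {x. contr F (\<lambda>x. a * x + r) x = contr F (\<lambda>x. a * k * x + s) x} = 4
         \<longleftrightarrow> a * F + r \<noteq> F \<and> a * k * ((F - r) / a) + s = a * F + r
             \<and> a * ((F - s) / (a * k)) + r = a * k * F + s"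
    using a by (intro card_contr_agree_eq_4_iff[OF inj_affine inj_affine _ _ affine_coincidence])
      simp_all
  then show ?thesis
    using affine_exchange_iff[OF a k(1)] by blast
qed

lemma three_neq_zero_if_card_mod_3:
  assumes "card (UNIV :: 'a::ring_1 set) mod 3 = 1"
  shows "(3::'a) \<noteq> 0"
proof
  assume three: "(3::'a) = 0"
  obtain m where m: "card (UNIV :: 'a set) = 3 * m + 1"
    using assms by (metis mod_div_mult_eq add.commute mult.commute)
  have "(0::'a) = of_nat (card (UNIV :: 'a set))"
    using CHAR_dvd_CARD by (simp add: of_nat_eq_0_iff_char_dvd)
  also have "\<dots> = 3 * of_nat m + 1"
    by (simp add: m)
  finally show False
    using three by simp
qed

lemma card_ge_4_if_card_mod_3:
  assumes "card (UNIV :: 'a::{field,finite} set) mod 3 = 1"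
  shows "4 \<le> card (UNIV :: 'a set)"
proof -
  have "card {0::'a, 1} \<le> card (UNIV :: 'a set)"
    by (rule card_mono) auto
  then have "2 \<le> card (UNIV :: 'a set)"
    by simp
  with assms show ?thesis
    by presburger
qed

lemma cyclotomic3_inverse:
  fixes t :: "'a::field"
  assumes t: "t^2 + t + 1 = 0"
  shows "inverse t = - t - 1"
proof (rule inverse_unique)
  have "t * (- t - 1) = 1 - (t^2 + t + 1)"
    by (simp add: algebra_simps power2_eq_square)
  with t show "t * (- t - 1) = 1"
    by simp
qed

lemma cyclotomic3_zero_iff:
  fixes t k :: "'a::field"
  assumes t: "t^2 + t + 1 = 0"
  shows "k^2 + k + 1 = 0 \<longleftrightarrow> k = t \<or> k = inverse t"
proof -
  have "k^2 + k + 1 = (k - t) * (k - inverse t)"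
    unfolding cyclotomic3_inverse[OF t] using t by (simp add: algebra_simps power2_eq_square)
  then show ?thesis
    by simp
qed

lemma cyclotomic3_root_neq_inverse:
  fixes t :: "'a::field"
  assumes three: "(3::'a) \<noteq> 0" and t: "t^2 + t + 1 = 0"
  shows "t \<noteq> inverse t"
proof -
  have "(t - inverse t)^2 = 4 * (t^2 + t + 1) - 3"
    unfolding cyclotomic3_inverse[OF t] by (simp add: algebra_simps power2_eq_square)
  with three t show ?thesis
    by auto
qed

lemma hd_eq_card_minus_card_agree:
  fixes f g :: "'a::finite \<Rightarrow> 'b"
  shows "hd f g = card (UNIV :: 'a set) - card {x. f x = g x}"
proof -
  have "{x. f x \<noteq> g x} = UNIV - {x. f x = g x}"
    by auto
  then show ?thesis
    unfolding hd_def by (simp add: card_Diff_subset)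
qed

lemma CA_adj_iff_card_contr_agree:
  assumes "4 \<le> card (UNIV :: 'a::{field,finite} set)"
  shows "CA_adj F \<pi> \<sigma> \<longleftrightarrow> \<pi> \<in> AGL1 \<and> \<sigma> \<in> AGL1 \<and> \<pi> \<noteq> \<sigma>
           \<and> card {x::'a. contr F \<pi> x = contr F \<sigma> x} = 4"
proof -
  have "card {x::'a. contr F \<pi> x = contr F \<sigma> x} \<le> card (UNIV :: 'a set)"
    by (rule card_mono) auto
  with assms show ?thesis
    unfolding CA_adj_def hd_eq_card_minus_card_agree by auto
qed

lemma CA_adj_affine_iff:
  fixes F a r :: "'a::{field,finite}"
  assumes q: "4 \<le> card (UNIV :: 'a set)" and a: "a \<noteq> 0"
  shows "CA_adj F (\<lambda>x. a * x + r) \<sigma> \<longleftrightarrow> a * F + r \<noteq> F \<and>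
           (\<exists>k. k^2 + k + 1 = 0 \<and> k \<noteq> 1 \<and> \<sigma> = (\<lambda>x. a * k * x + (a - k) * F + r * (1 + k)))"
proof
  assume adj: "CA_adj F (\<lambda>x. a * x + r) \<sigma>"
  then obtain b s where b: "b \<noteq> 0" and \<sigma>: "\<sigma> = (\<lambda>x. b * x + s)"
    unfolding CA_adj_def AGL1_def by auto
  define k where "k = b / a"
  have bk: "b = a * k" and k: "k \<noteq> 0"
    using a b unfolding k_def by auto
  have card4: "card {x. contr F (\<lambda>x. a * x + r) x = contr F (\<lambda>x. a * k * x + s) x} = 4"
    and ne: "(\<lambda>x. a * x + r) \<noteq> (\<lambda>x. a * k * x + s)"
    using adj unfolding CA_adj_iff_card_contr_agree[OF q] \<sigma> bk by auto
  have "k \<noteq> 1"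
  proof
    assume "k = 1"
    with ne have "r \<noteq> s"
      by auto
    then have "card {x. contr F (\<lambda>x. a * x + r) x = contr F (\<lambda>x. a * x + s) x} \<le> 3"
      using a by (intro card_contr_agree_le_3[OF inj_affine[OF a, of r] inj_affine[OF a, of s],
                                                of "(F - r) / a" F "(F - s) / a"]) auto
    with card4 \<open>k = 1\<close> show False
      by simp
  qed
  with card4 show "a * F + r \<noteq> F \<and>
      (\<exists>k. k^2 + k + 1 = 0 \<and> k \<noteq> 1 \<and> \<sigma> = (\<lambda>x. a * k * x + (a - k) * F + r * (1 + k)))"
    using card_contr_agree_affine_eq_4_iff[OF a k \<open>k \<noteq> 1\<close>] unfolding \<sigma> bk
    by (auto simp: add.assoc)
next
  assume "a * F + r \<noteq> F \<and>
    (\<exists>k. k^2 + k + 1 = 0 \<and> k \<noteq> 1 \<and> \<sigma> = (\<lambda>x. a * k * x + (a - k) * F + r * (1 + k)))"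
  then obtain k where moved: "a * F + r \<noteq> F" and k: "k^2 + k + 1 = 0" "k \<noteq> 1"
    and \<sigma>: "\<sigma> = (\<lambda>x. a * k * x + ((a - k) * F + r * (1 + k)))"
    by (auto simp: add.assoc)
  have "k \<noteq> 0"
    using k by auto
  then show "CA_adj F (\<lambda>x. a * x + r) \<sigma>"
    using a k moved card_contr_agree_affine_eq_4_iff[OF a \<open>k \<noteq> 0\<close> \<open>k \<noteq> 1\<close>]
    unfolding CA_adj_iff_card_contr_agree[OF q] \<sigma> affine_eq_iff
    by (simp add: affine_in_AGL1)
qed

theorem lemma5:
  fixes F t1 a r :: "'a::{field,finite}"
  assumes "card (UNIV :: 'a set) mod 3 = 1"
    and "t1 ^ 2 + t1 + 1 = 0"
    and "a \<noteq> 0"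
    and "\<exists>\<sigma>. CA_adj F (\<lambda>x. a * x + r) \<sigma>"
  shows "{\<sigma>. CA_adj F (\<lambda>x. a * x + r) \<sigma>} =
           {(\<lambda>x. a * t1 * x + (a - t1) * F + r * (1 + t1)),
            (\<lambda>x. a * inverse t1 * x + (a - inverse t1) * F + r * (1 + inverse t1))}
       \<and> card {\<sigma>. CA_adj F (\<lambda>x. a * x + r) \<sigma>} = 2"
proof -
  note adj_iff = CA_adj_affine_iff[OF card_ge_4_if_card_mod_3[OF assms(1)] assms(3)]
  have three: "(3::'a) \<noteq> 0"
    using three_neq_zero_if_card_mod_3[OF assms(1)] .
  have roots: "k^2 + k + 1 = 0 \<longleftrightarrow> k = t1 \<or> k = inverse t1" for k
    using cyclotomic3_zero_iff[OF assms(2)] .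
  have "k \<noteq> 1" if "k^2 + k + 1 = 0" for k :: 'a
    using that three by auto
  moreover have "a * F + r \<noteq> F"
    using assms(4) adj_iff by blast
  ultimately have neighbours: "{\<sigma>. CA_adj F (\<lambda>x. a * x + r) \<sigma>} =
           {(\<lambda>x. a * t1 * x + (a - t1) * F + r * (1 + t1)),
            (\<lambda>x. a * inverse t1 * x + (a - inverse t1) * F + r * (1 + inverse t1))}"
    unfolding adj_iff roots by blast
  have "(\<lambda>x. a * t1 * x + (a - t1) * F + r * (1 + t1)) \<noteq>
        (\<lambda>x. a * inverse t1 * x + (a - inverse t1) * F + r * (1 + inverse t1))"
    using assms(3) cyclotomic3_root_neq_inverse[OF three assms(2)]
    by (simp add: add.assoc affine_eq_iff)
  with neighbours show ?thesis
    by simp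
qed

end
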